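(* Let $V=\{1,\dots,n\}$ and let $H=(V,E)$ with $E=\{e\subseteq V : 2\le|e|\le 3\}$. The toric ideal $I_H$ is generated by polynomials of degree $2$ and $3$ (quadrics and cubics). In particular, for $H'=(V,E')$ with $E'=\{e\subseteq V : |e|\ge 2\}$, the toric ideal $I_{H'}$ — which is the ideal of the image of the first tangential variety $\mathrm{Tan}((\mathbb P^1)^n)$ in higher cumulant coordinates — is generated in degrees $2$ and $3$.
   Context: For a hypergraph $H=(V,E)$ (edges are nonempty subsets of $V=\{1,\dots,n\}$, no repeated edges) and a field $K$, the toric ideal $I_H$ is the kernel of the $K$-algebra homomorphism $K[t_e : e\in E]\to K[x_1,\dots,x_n]$, $t_e\mapsto\prod_{j\in e}x_j$. By a result of Sturmfels and Zwiernik, the set of polynomials vanishing on the image of $\mathrm{Tan}((\mathbb P^1)^n)$ in higher cumulants is exactly $I_{H'}$ for the hypergraph $H'$ whose edges are all subsets of $V$ of size at least $2$. *)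

theory Defs
  imports Main "HOL-Library.Poly_Mapping"
begin

text \<open>Multivariate polynomials over a field 'k in variables indexed by 'v are
  represented as finitely supported maps from monomials (exponent vectors
  'v => nat) to coefficients.\<close>
type_synonym ('v, 'k) mpoly = "('v \<Rightarrow>\<^sub>0 nat) \<Rightarrow>\<^sub>0 'k"

definition mvar :: "'v \<Rightarrow> ('v, 'k::comm_ring_1) mpoly" where
  "mvar v = Poly_Mapping.single (Poly_Mapping.single v 1) 1"

definition mconst :: "'k::comm_ring_1 \<Rightarrow> ('v, 'k) mpoly" where
  "mconst c = Poly_Mapping.single 0 c"

text \<open>The polynomial ring K[t_e : e \<in> E] as a subset: all monomials only use
  variables from E.\<close>
definition poly_ring_on :: "'v set \<Rightarrow> ('v, 'k::comm_ring_1) mpoly set" where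
  "poly_ring_on E = {p. \<forall>m \<in> Poly_Mapping.keys p. Poly_Mapping.keys m \<subseteq> E}"

definition total_degree :: "('v, 'k::comm_ring_1) mpoly \<Rightarrow> nat" where
  "total_degree p = Max ((\<lambda>m. \<Sum>v\<in>Poly_Mapping.keys m. Poly_Mapping.lookup m v) ` Poly_Mapping.keys p)"

definition ideal_gen_on :: "'v set \<Rightarrow> ('v, 'k::comm_ring_1) mpoly set \<Rightarrow> ('v, 'k) mpoly set" where
  "ideal_gen_on E G = {p. \<exists>F c. finite F \<and> F \<subseteq> G \<and> (\<forall>g\<in>F. c g \<in> poly_ring_on E)
                          \<and> p = (\<Sum>g\<in>F. c g * g)}"

definition edge_monomial :: "nat set \<Rightarrow> (nat, 'k::comm_ring_1) mpoly" where
  "edge_monomial e = (\<Prod>j\<in>e. mvar j)"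

definition hyper_hom :: "(nat set, 'k::comm_ring_1) mpoly \<Rightarrow> (nat, 'k) mpoly" where
  "hyper_hom p = (\<Sum>m\<in>Poly_Mapping.keys p. mconst (Poly_Mapping.lookup p m) *
                     (\<Prod>e\<in>Poly_Mapping.keys m. edge_monomial e ^ Poly_Mapping.lookup m e))"

definition toric_ideal :: "nat set set \<Rightarrow> (nat set, 'k::field) mpoly set" where
  "toric_ideal E = {p \<in> poly_ring_on E. hyper_hom p = 0}"

definition generated_in_degrees_2_3 :: "nat set set \<Rightarrow> (nat set, 'k::field) mpoly set \<Rightarrow> bool" where
  "generated_in_degrees_2_3 E I \<longleftrightarrow>
     (\<exists>G. G \<subseteq> poly_ring_on E \<and> (\<forall>g\<in>G. g \<noteq> 0 \<and> total_degree g \<in> {2, 3})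
          \<and> ideal_gen_on E G = I)"

end

theory Submission
  imports Defs "HOL-Library.Multiset"
begin

text \<open>
  Encode a monomial of \<open>K[t\<^sub>e : e \<in> E]\<close> by the multiset \<open>M\<close> of its edges; it is mapped to the
  monomial given by the multiset of vertices of \<open>M\<close>, counted with degree. The toric ideal is
  therefore spanned by the binomials \<open>t\<^sup>M - t\<^sup>N\<close> of multisets with equal vertex degrees, and it
  is generated in degrees 2 and 3 once any two such multisets are connected by moves that
  replace at most three edges by at most three edges.

  An edge with more than three vertices splits off a pair by a quadratic move. For multisets of
  pairs and triples, two triples are first traded for three pairs by a cubic move. Then, with
  \<open>v\<close> a vertex of maximal degree and \<open>u\<close> one of maximal degree among the others, a single
  quadratic move makes the pair \<open>{v, u}\<close> appear in each multiset; maximality of the degrees is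
  exactly what guarantees that the two edges exchanged by this move fit together. Removing
  \<open>{v, u}\<close> from both and inducting on the number of vertex incidences finishes the proof.
\<close>

section \<open>Monomials as multisets\<close>

definition pm_of_mset :: "'a multiset \<Rightarrow> 'a \<Rightarrow>\<^sub>0 nat" where
  "pm_of_mset M = Abs_poly_mapping (count M)"

definition mset_of_pm :: "('a \<Rightarrow>\<^sub>0 nat) \<Rightarrow> 'a multiset" where
  "mset_of_pm A = Abs_multiset (Poly_Mapping.lookup A)"

lemma lookup_pm_of_mset [simp]: "Poly_Mapping.lookup (pm_of_mset M) = count M"
  unfolding pm_of_mset_def by (simp add: Poly_Mapping.lookup_Abs_poly_mapping)

lemma count_mset_of_pm [simp]: "count (mset_of_pm A) = Poly_Mapping.lookup A"
  unfolding mset_of_pm_def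
  by (rule count_Abs_multiset) (metis Poly_Mapping.finite_lookup_nat)

lemma pm_of_mset_of_pm [simp]: "pm_of_mset (mset_of_pm A) = A"
  by (rule poly_mapping_eqI) simp

lemma mset_of_pm_of_mset [simp]: "mset_of_pm (pm_of_mset M) = M"
  by (rule multiset_eqI) simp

lemma pm_of_mset_inject [simp]: "pm_of_mset M = pm_of_mset N \<longleftrightarrow> M = N"
  by (metis mset_of_pm_of_mset)

lemma keys_pm_of_mset [simp]: "Poly_Mapping.keys (pm_of_mset M) = set_mset M"
  by (auto simp: in_keys_iff)

lemma set_mset_of_pm [simp]: "set_mset (mset_of_pm A) = Poly_Mapping.keys A"
  by (metis keys_pm_of_mset pm_of_mset_of_pm)

lemma pm_of_mset_union: "pm_of_mset (M + N) = pm_of_mset M + pm_of_mset N"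
  by (rule poly_mapping_eqI) (simp add: lookup_add)

lemma pm_of_mset_empty [simp]: "pm_of_mset {#} = 0"
  by (rule poly_mapping_eqI) simp

lemma pm_of_mset_add_mset: "pm_of_mset (add_mset x M) = Poly_Mapping.single x 1 + pm_of_mset M"
  by (rule poly_mapping_eqI) (simp add: lookup_add lookup_single when_def)

lemma mset_of_pm_add: "mset_of_pm (A + B) = mset_of_pm A + mset_of_pm B"
  by (rule multiset_eqI) (simp add: lookup_add)

definition mset_monomial :: "'a multiset \<Rightarrow> ('a, 'k::comm_ring_1) mpoly" where
  "mset_monomial M = Poly_Mapping.single (pm_of_mset M) 1"

lemma mset_monomial_empty [simp]: "mset_monomial {#} = 1"
  by (simp add: mset_monomial_def single_one)

lemma mset_monomial_union:
  "mset_monomial (M + N) = (mset_monomial M * mset_monomial N :: ('a, 'k::comm_ring_1) mpoly)"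
  by (simp add: mset_monomial_def mult_single pm_of_mset_union)

definition vertex_mset :: "'a set multiset \<Rightarrow> 'a multiset" where
  "vertex_mset M = (\<Sum>e\<in>#M. mset_set e)"

lemma vertex_mset_empty [simp]: "vertex_mset {#} = {#}"
  by (simp add: vertex_mset_def)

lemma vertex_mset_add_mset [simp]: "vertex_mset (add_mset e M) = mset_set e + vertex_mset M"
  by (simp add: vertex_mset_def)

lemma vertex_mset_union [simp]: "vertex_mset (M + N) = vertex_mset M + vertex_mset N"
  by (simp add: vertex_mset_def)

definition edge_degrees :: "('a set \<Rightarrow>\<^sub>0 nat) \<Rightarrow> 'a \<Rightarrow>\<^sub>0 nat" where
  "edge_degrees m = pm_of_mset (vertex_mset (mset_of_pm m))"

lemma edge_degrees_add: "edge_degrees (a + b) = edge_degrees a + edge_degrees b"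
  by (simp add: edge_degrees_def mset_of_pm_add pm_of_mset_union)

definition map_monomials :: "('a \<Rightarrow> 'b) \<Rightarrow> ('a \<Rightarrow>\<^sub>0 'k::comm_ring_1) \<Rightarrow> 'b \<Rightarrow>\<^sub>0 'k" where
  "map_monomials f p = (\<Sum>m\<in>Poly_Mapping.keys p. Poly_Mapping.single (f m) (Poly_Mapping.lookup p m))"

lemma poly_mapping_sum_single:
  "p = (\<Sum>a\<in>Poly_Mapping.keys p. Poly_Mapping.single a (Poly_Mapping.lookup p a))"
proof (rule poly_mapping_eqI)
  fix k
  have "Poly_Mapping.lookup (\<Sum>a\<in>Poly_Mapping.keys p. Poly_Mapping.single a (Poly_Mapping.lookup p a)) k
      = (\<Sum>a\<in>Poly_Mapping.keys p. if a = k then Poly_Mapping.lookup p a else 0)"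
    by (simp add: lookup_sum lookup_single when_def)
  also have "\<dots> = Poly_Mapping.lookup p k"
    by (simp add: sum.delta' in_keys_iff)
  finally show "Poly_Mapping.lookup p k
      = Poly_Mapping.lookup (\<Sum>a\<in>Poly_Mapping.keys p. Poly_Mapping.single a (Poly_Mapping.lookup p a)) k"
    by simp
qed

lemma map_monomials_zero [simp]: "map_monomials f 0 = 0"
  by (simp add: map_monomials_def)

lemma map_monomials_single [simp]:
  "map_monomials f (Poly_Mapping.single a c) = Poly_Mapping.single (f a) c"
  by (cases "c = 0") (simp_all add: map_monomials_def)

lemma map_monomials_add: "map_monomials f (p + q) = map_monomials f p + map_monomials f q"
  unfolding map_monomials_def by (rule setsum_keys_plus_distrib) (simp_all add: single_add)

lemma map_monomials_sum: "map_monomials f (\<Sum>i\<in>S. g i) = (\<Sum>i\<in>S. map_monomials f (g i))"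
  by (induction S rule: infinite_finite_induct) (simp_all add: map_monomials_add)

lemma map_monomials_diff: "map_monomials f (p - q) = map_monomials f p - map_monomials f q"
  using map_monomials_add[of f "p - q" q] by (simp add: eq_diff_eq)

lemma map_monomials_mult:
  assumes hom: "\<And>a b. f (a + b) = f a + f b"
  shows "map_monomials f (p * q) = map_monomials f p * map_monomials f q"
proof -
  have "p * q = (\<Sum>a\<in>Poly_Mapping.keys p. Poly_Mapping.single a (Poly_Mapping.lookup p a)) *
      (\<Sum>b\<in>Poly_Mapping.keys q. Poly_Mapping.single b (Poly_Mapping.lookup q b))"
    using poly_mapping_sum_single[of p] poly_mapping_sum_single[of q] by simp
  also have "\<dots> = (\<Sum>a\<in>Poly_Mapping.keys p. \<Sum>b\<in>Poly_Mapping.keys q.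
      Poly_Mapping.single (a + b) (Poly_Mapping.lookup p a * Poly_Mapping.lookup q b))"
    by (simp add: sum_product mult_single)
  finally have "map_monomials f (p * q) = (\<Sum>a\<in>Poly_Mapping.keys p. \<Sum>b\<in>Poly_Mapping.keys q.
      Poly_Mapping.single (f a + f b) (Poly_Mapping.lookup p a * Poly_Mapping.lookup q b))"
    by (simp add: map_monomials_sum hom)
  also have "\<dots> = map_monomials f p * map_monomials f q"
    by (simp add: map_monomials_def sum_product mult_single)
  finally show ?thesis .
qed

lemma map_monomials_eq_0_imp_collision:
  assumes "map_monomials f p = 0" "m0 \<in> Poly_Mapping.keys p"
  shows "\<exists>m1\<in>Poly_Mapping.keys p. m1 \<noteq> m0 \<and> f m1 = f m0"
proof (rule ccontr)
  assume "\<not> ?thesis"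
  then have "Poly_Mapping.lookup (map_monomials f p) (f m0)
      = (\<Sum>m\<in>Poly_Mapping.keys p. if m = m0 then Poly_Mapping.lookup p m else 0)"
    unfolding map_monomials_def lookup_sum
    by (intro sum.cong) (auto simp: lookup_single when_def)
  also have "\<dots> = Poly_Mapping.lookup p m0"
    using assms(2) by simp
  finally show False
    using assms by (simp add: in_keys_iff)
qed

lemma edge_monomial_eq_mset_monomial: "edge_monomial e = mset_monomial (mset_set e)"
proof (cases "finite e")
  case True
  then show ?thesis
    by (induction e rule: finite_induct)
      (simp_all add: edge_monomial_def mset_monomial_def mvar_def pm_of_mset_add_mset mult_single)
qed (simp add: edge_monomial_def mset_monomial_def)

lemma prod_mset_edge_monomial:
  "(\<Prod>e\<in>#M. edge_monomial e) = (mset_monomial (vertex_mset M) :: (nat, 'k::comm_ring_1) mpoly)"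
  by (induction M) (simp_all add: edge_monomial_eq_mset_monomial mset_monomial_union)

lemma hyper_hom_eq_map_monomials:
  "hyper_hom p = map_monomials edge_degrees (p :: (nat set, 'k::comm_ring_1) mpoly)"
proof -
  have "(\<Prod>e\<in>Poly_Mapping.keys m. (edge_monomial e :: (nat, 'k) mpoly) ^ Poly_Mapping.lookup m e)
      = Poly_Mapping.single (edge_degrees m) 1" for m :: "nat set \<Rightarrow>\<^sub>0 nat"
  proof -
    have "(\<Prod>e\<in>Poly_Mapping.keys m. (edge_monomial e :: (nat, 'k) mpoly) ^ Poly_Mapping.lookup m e)
        = (\<Prod>e\<in>#mset_of_pm m. edge_monomial e)"
      by (simp add: image_prod_mset_multiplicity)
    then show ?thesis
      by (simp add: prod_mset_edge_monomial mset_monomial_def edge_degrees_def)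
  qed
  then show ?thesis
    unfolding hyper_hom_def map_monomials_def
    by (intro sum.cong) (simp_all add: mconst_def mult_single)
qed

lemma poly_ring_on_zero [simp]: "0 \<in> poly_ring_on E"
  by (simp add: poly_ring_on_def)

lemma single_mem_poly_ring_on: "Poly_Mapping.keys m \<subseteq> E \<Longrightarrow> Poly_Mapping.single m c \<in> poly_ring_on E"
  by (simp add: poly_ring_on_def)

lemma const_mem_poly_ring_on: "Poly_Mapping.single 0 c \<in> poly_ring_on E"
  by (simp add: poly_ring_on_def)

lemma poly_ring_on_keys_subset:
  "q \<in> poly_ring_on E \<Longrightarrow> Poly_Mapping.keys p \<subseteq> Poly_Mapping.keys q \<Longrightarrow> p \<in> poly_ring_on E"
  unfolding poly_ring_on_def by blast

lemma poly_ring_on_add: "p \<in> poly_ring_on E \<Longrightarrow> q \<in> poly_ring_on E \<Longrightarrow> p + q \<in> poly_ring_on E"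
  unfolding poly_ring_on_def mem_Collect_eq by (meson Un_iff keys_add subsetD)

lemma poly_ring_on_diff: "p \<in> poly_ring_on E \<Longrightarrow> q \<in> poly_ring_on E \<Longrightarrow> p - q \<in> poly_ring_on E"
  unfolding poly_ring_on_def mem_Collect_eq by (meson Un_iff keys_diff subsetD)

lemma poly_ring_on_mult:
  assumes "p \<in> poly_ring_on E" "q \<in> poly_ring_on E"
  shows "p * q \<in> poly_ring_on E"
  unfolding poly_ring_on_def
proof (intro CollectI ballI)
  fix m assume "m \<in> Poly_Mapping.keys (p * q)"
  then obtain a b where "m = a + b" "a \<in> Poly_Mapping.keys p" "b \<in> Poly_Mapping.keys q"
    using keys_mult by blast
  moreover have "Poly_Mapping.keys (a + b) \<subseteq> Poly_Mapping.keys a \<union> Poly_Mapping.keys b"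
    by (rule keys_add)
  ultimately show "Poly_Mapping.keys m \<subseteq> E"
    using assms unfolding poly_ring_on_def by blast
qed

lemma poly_ring_on_sum: "(\<And>i. i \<in> S \<Longrightarrow> f i \<in> poly_ring_on E) \<Longrightarrow> sum f S \<in> poly_ring_on E"
  by (induction S rule: infinite_finite_induct) (auto intro: poly_ring_on_add)

lemma ideal_gen_on_zero: "0 \<in> ideal_gen_on E G"
  unfolding ideal_gen_on_def by (intro CollectI exI[of _ "{}"]) simp

lemma ideal_gen_on_generator: "g \<in> G \<Longrightarrow> g \<in> ideal_gen_on E G"
  unfolding ideal_gen_on_def
  by (intro CollectI exI[of _ "{g}"] exI[of _ "\<lambda>_. 1"]) (simp add: poly_ring_on_def)

lemma ideal_gen_on_add:
  assumes "p \<in> ideal_gen_on E G" "q \<in> ideal_gen_on E G"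
  shows "p + q \<in> ideal_gen_on E G"
proof -
  obtain F1 c1 where 1: "finite F1" "F1 \<subseteq> G" "\<forall>g\<in>F1. c1 g \<in> poly_ring_on E" "p = (\<Sum>g\<in>F1. c1 g * g)"
    using assms(1) unfolding ideal_gen_on_def by blast
  obtain F2 c2 where 2: "finite F2" "F2 \<subseteq> G" "\<forall>g\<in>F2. c2 g \<in> poly_ring_on E" "q = (\<Sum>g\<in>F2. c2 g * g)"
    using assms(2) unfolding ideal_gen_on_def by blast
  define c where "c g = (if g \<in> F1 then c1 g else 0) + (if g \<in> F2 then c2 g else 0)" for g
  have "(\<Sum>g\<in>F1 \<union> F2. c g * g)
      = (\<Sum>g\<in>F1 \<union> F2. if g \<in> F1 then c1 g * g else 0) + (\<Sum>g\<in>F1 \<union> F2. if g \<in> F2 then c2 g * g else 0)"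
    unfolding sum.distrib[symmetric] by (rule sum.cong) (simp_all add: c_def distrib_right)
  also have "\<dots> = p + q"
    using 1 2 by (simp add: sum.inter_restrict[symmetric] Int_absorb1 Int_absorb2 sup_commute)
  finally have "p + q = (\<Sum>g\<in>F1 \<union> F2. c g * g)" by simp
  moreover have "\<forall>g\<in>F1 \<union> F2. c g \<in> poly_ring_on E"
    using 1 2 unfolding c_def by (auto intro!: poly_ring_on_add)
  ultimately show ?thesis
    using 1 2 unfolding ideal_gen_on_def by (intro CollectI exI[of _ "F1 \<union> F2"] exI[of _ c]) simp
qed

lemma ideal_gen_on_mult:
  assumes "r \<in> poly_ring_on E" "p \<in> ideal_gen_on E G"
  shows "r * p \<in> ideal_gen_on E G"
proof -
  obtain F c where F: "finite F" "F \<subseteq> G" "\<forall>g\<in>F. c g \<in> poly_ring_on E" "p = (\<Sum>g\<in>F. c g * g)"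
    using assms(2) unfolding ideal_gen_on_def by blast
  have "r * p = (\<Sum>g\<in>F. (r * c g) * g)"
    unfolding F(4) sum_distrib_left by (simp add: mult.assoc)
  moreover have "\<forall>g\<in>F. r * c g \<in> poly_ring_on E"
    using F(3) assms(1) poly_ring_on_mult by blast
  ultimately show ?thesis
    using F(1,2) unfolding ideal_gen_on_def by (intro CollectI exI[of _ F] exI[of _ "\<lambda>g. r * c g"]) simp
qed

lemma ideal_gen_on_uminus: "p \<in> ideal_gen_on E G \<Longrightarrow> - p \<in> ideal_gen_on E G"
proof -
  assume "p \<in> ideal_gen_on E G"
  then have "Poly_Mapping.single 0 (-1) * p \<in> ideal_gen_on E G"
    by (rule ideal_gen_on_mult[OF const_mem_poly_ring_on])
  then show ?thesis
    by (simp add: single_uminus)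
qed

section \<open>Toric ideals are spanned by the binomials of their fibres\<close>

text \<open>A nonzero element of the toric ideal has two monomials in the same fibre; subtracting a
  multiple of their binomial cancels one of them.\<close>

lemma toric_ideal_remove_binomial:
  fixes p :: "(nat set, 'k::field) mpoly"
  assumes "p \<in> toric_ideal E" "p \<noteq> 0"
  shows "\<exists>m0 m1 c p'. Poly_Mapping.keys m0 \<subseteq> E \<and> Poly_Mapping.keys m1 \<subseteq> E \<and>
    edge_degrees m0 = edge_degrees m1 \<and> p' \<in> toric_ideal E \<and>
    card (Poly_Mapping.keys p') < card (Poly_Mapping.keys p) \<and>
    p = p' + Poly_Mapping.single 0 c * (Poly_Mapping.single m0 1 - Poly_Mapping.single m1 1)"
proof -
  obtain m0 where m0: "m0 \<in> Poly_Mapping.keys p"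
    using assms(2) keys_eq_empty by blast
  have p: "p \<in> poly_ring_on E" "map_monomials edge_degrees p = 0"
    using assms(1) by (simp_all add: toric_ideal_def hyper_hom_eq_map_monomials)
  obtain m1 where m1: "m1 \<in> Poly_Mapping.keys p" "m1 \<noteq> m0" "edge_degrees m1 = edge_degrees m0"
    using map_monomials_eq_0_imp_collision[OF p(2) m0] by blast
  define c where "c = Poly_Mapping.lookup p m0"
  define b where "b = Poly_Mapping.single m0 1 - (Poly_Mapping.single m1 1 :: (nat set, 'k) mpoly)"
  define p' where "p' = p - Poly_Mapping.single 0 c * b"
  have "Poly_Mapping.lookup p' k
      = Poly_Mapping.lookup p k - (if k = m0 then c else 0) + (if k = m1 then c else 0)" for k
    by (simp add: p'_def b_def mult_single right_diff_distrib lookup_minus lookup_single when_def)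
  then have keys_p': "Poly_Mapping.keys p' \<subseteq> Poly_Mapping.keys p - {m0}"
    using m0 m1 by (auto simp: c_def in_keys_iff split: if_splits)
  then have "card (Poly_Mapping.keys p') < card (Poly_Mapping.keys p)"
    using m0 by (intro psubset_card_mono) auto
  moreover have "p' \<in> toric_ideal E"
  proof -
    have "p' \<in> poly_ring_on E"
      using keys_p' by (intro poly_ring_on_keys_subset[OF p(1)]) blast
    moreover have "map_monomials edge_degrees b = 0"
      by (simp add: b_def map_monomials_diff m1(3))
    then have "map_monomials edge_degrees p' = 0"
      using p(2) by (simp add: p'_def map_monomials_diff map_monomials_mult[OF edge_degrees_add])
    ultimately show ?thesis
      by (simp add: toric_ideal_def hyper_hom_eq_map_monomials)
  qed
  moreover have "Poly_Mapping.keys m0 \<subseteq> E" "Poly_Mapping.keys m1 \<subseteq> E"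
    using p(1) m0 m1(1) unfolding poly_ring_on_def by blast+
  moreover have "p = p' + Poly_Mapping.single 0 c * b"
    by (simp add: p'_def)
  ultimately show ?thesis
    using m1(3)[symmetric] unfolding b_def by blast
qed

lemma toric_ideal_subset_ideal_gen_on:
  fixes G :: "(nat set, 'k::field) mpoly set"
  assumes binomial: "\<And>m m'. Poly_Mapping.keys m \<subseteq> E \<Longrightarrow> Poly_Mapping.keys m' \<subseteq> E \<Longrightarrow>
      edge_degrees m = edge_degrees m' \<Longrightarrow> Poly_Mapping.single m 1 - Poly_Mapping.single m' 1 \<in> ideal_gen_on E G"
  shows "toric_ideal E \<subseteq> ideal_gen_on E G"
proof
  fix p :: "(nat set, 'k) mpoly"
  show "p \<in> toric_ideal E \<Longrightarrow> p \<in> ideal_gen_on E G"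
  proof (induction "card (Poly_Mapping.keys p)" arbitrary: p rule: less_induct)
    case less
    show ?case
    proof (cases "p = 0")
      case True
      then show ?thesis
        by (simp add: ideal_gen_on_zero)
    next
      case False
      then obtain m0 m1 c p' where "Poly_Mapping.keys m0 \<subseteq> E" "Poly_Mapping.keys m1 \<subseteq> E"
        "edge_degrees m0 = edge_degrees m1" and p': "p' \<in> toric_ideal E"
        "card (Poly_Mapping.keys p') < card (Poly_Mapping.keys p)"
        and p: "p = p' + Poly_Mapping.single 0 c * (Poly_Mapping.single m0 1 - Poly_Mapping.single m1 1)"
        using toric_ideal_remove_binomial[OF less.prems] by blast
      then have "Poly_Mapping.single 0 c * (Poly_Mapping.single m0 1 - Poly_Mapping.single m1 1)
          \<in> ideal_gen_on E G"
        by (intro ideal_gen_on_mult[OF const_mem_poly_ring_on] binomial)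
      moreover have "p' \<in> ideal_gen_on E G"
        using less.hyps p' by blast
      ultimately show ?thesis
        unfolding p by (intro ideal_gen_on_add)
    qed
  qed
qed

lemma ideal_gen_on_subset_toric_ideal:
  assumes "G \<subseteq> toric_ideal E"
  shows "ideal_gen_on E G \<subseteq> toric_ideal E"
proof
  fix p assume "p \<in> ideal_gen_on E G"
  then obtain F c where F: "finite F" "F \<subseteq> G" "\<forall>g\<in>F. c g \<in> poly_ring_on E" "p = (\<Sum>g\<in>F. c g * g)"
    unfolding ideal_gen_on_def by blast
  have g: "g \<in> poly_ring_on E" "map_monomials edge_degrees g = 0" if "g \<in> F" for g
    using assms F(2) that by (auto simp: toric_ideal_def hyper_hom_eq_map_monomials)
  have "p \<in> poly_ring_on E"
    unfolding F(4) using F(3) g(1) by (intro poly_ring_on_sum poly_ring_on_mult) auto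
  moreover have "map_monomials edge_degrees p
      = (\<Sum>g\<in>F. map_monomials edge_degrees (c g) * map_monomials edge_degrees g)"
    unfolding F(4) by (simp add: map_monomials_sum map_monomials_mult[OF edge_degrees_add])
  then have "map_monomials edge_degrees p = 0"
    using g(2) by simp
  ultimately show "p \<in> toric_ideal E"
    by (simp add: toric_ideal_def hyper_hom_eq_map_monomials)
qed

definition small_edges :: "'a set \<Rightarrow> 'a set multiset \<Rightarrow> bool" where
  "small_edges B M \<longleftrightarrow> (\<forall>e\<in>#M. e \<subseteq> B \<and> 2 \<le> card e \<and> card e \<le> 3)"

definition vertex_degree :: "'a set multiset \<Rightarrow> 'a \<Rightarrow> nat" where
  "vertex_degree M x = size {#e \<in># M. x \<in> e#}"

definition triple_count :: "'a set multiset \<Rightarrow> nat" where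
  "triple_count M = size {#e \<in># M. card e = 3#}"

lemma small_edges_empty [simp]: "small_edges B {#}"
  by (simp add: small_edges_def)

lemma small_edges_add_mset [simp]:
  "small_edges B (add_mset e M) \<longleftrightarrow> (e \<subseteq> B \<and> 2 \<le> card e \<and> card e \<le> 3) \<and> small_edges B M"
  by (auto simp: small_edges_def)

lemma small_edges_union [simp]: "small_edges B (M + N) \<longleftrightarrow> small_edges B M \<and> small_edges B N"
  by (auto simp: small_edges_def)

lemma small_edges_subset: "small_edges B M \<Longrightarrow> N \<subseteq># M \<Longrightarrow> small_edges B N"
  unfolding small_edges_def by (meson mset_subset_eqD)

lemma small_edgesD:
  assumes "small_edges B M" "e \<in># M"
  shows "e \<subseteq> B" "2 \<le> card e" "card e \<le> 3"
  using assms unfolding small_edges_def by auto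

lemma small_edges_finite: "small_edges B M \<Longrightarrow> e \<in># M \<Longrightarrow> finite e"
  unfolding small_edges_def by (metis card.infinite not_numeral_le_zero)

lemma vertex_degree_empty [simp]: "vertex_degree {#} x = 0"
  by (simp add: vertex_degree_def)

lemma vertex_degree_add_mset [simp]:
  "vertex_degree (add_mset e M) x = (if x \<in> e then 1 else 0) + vertex_degree M x"
  by (simp add: vertex_degree_def)

lemma triple_count_add_mset [simp]:
  "triple_count (add_mset e M) = (if card e = 3 then 1 else 0) + triple_count M"
  by (simp add: triple_count_def)

lemma triple_count_union [simp]: "triple_count (M + N) = triple_count M + triple_count N"
  by (simp add: triple_count_def)

lemma count_vertex_mset: "(\<And>e. e \<in># M \<Longrightarrow> finite e) \<Longrightarrow> count (vertex_mset M) x = vertex_degree M x"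
  by (induction M) auto

lemma size_vertex_mset_ge: "small_edges B M \<Longrightarrow> 2 * size M \<le> size (vertex_mset M)"
  by (induction M) auto

lemma vertex_degree_mono: "X \<subseteq># M \<Longrightarrow> vertex_degree X x \<le> vertex_degree M x"
  unfolding vertex_degree_def by (intro size_mset_mono multiset_filter_mono)

lemma vertex_degree_less_size: "e \<in># M \<Longrightarrow> x \<notin> e \<Longrightarrow> vertex_degree M x < size M"
  unfolding vertex_degree_def by (rule size_filter_unsat_elem)

lemma vertex_degree_less:
  assumes "\<And>e. e \<in># M \<Longrightarrow> u \<in> e \<Longrightarrow> y \<in> e" "f \<in># M" "y \<in> f" "u \<notin> f"
  shows "vertex_degree M u < vertex_degree M y"
proof -
  have "{#e \<in># M. u \<in> e#} = {#e \<in># {#e \<in># M. y \<in> e#}. u \<in> e#}"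
    unfolding filter_filter_mset using assms(1) by (intro filter_mset_cong) auto
  moreover have "size {#e \<in># {#e \<in># M. y \<in> e#}. u \<in> e#} < size {#e \<in># M. y \<in> e#}"
    using assms(2-4) by (intro size_filter_unsat_elem) auto
  ultimately show ?thesis
    unfolding vertex_degree_def by simp
qed

lemma vertex_degree_ge_2: "{#e, f#} \<subseteq># M \<Longrightarrow> x \<in> e \<Longrightarrow> x \<in> f \<Longrightarrow> 2 \<le> vertex_degree M x"
  using vertex_degree_mono[of "{#e, f#}" M x] by simp

lemma vertex_degree_le_triple_count:
  "(\<And>e. e \<in># M \<Longrightarrow> x \<in> e \<Longrightarrow> card e = 3) \<Longrightarrow> vertex_degree M x \<le> triple_count M"
  unfolding vertex_degree_def triple_count_def by (intro size_mset_mono filter_mset_mono_strong) auto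

lemma triple_count_mono: "X \<subseteq># M \<Longrightarrow> triple_count X \<le> triple_count M"
  unfolding triple_count_def by (intro size_mset_mono multiset_filter_mono)

lemma vertex_degree_eq_size: "(\<And>e. e \<in># M \<Longrightarrow> x \<in> e) \<Longrightarrow> vertex_degree M x = size M"
  unfolding vertex_degree_def by (metis filter_mset_True filter_mset_cong)

lemma vertex_degree_pos_ex_edge: "1 \<le> vertex_degree M x \<Longrightarrow> \<exists>e\<in>#M. x \<in> e"
  unfolding vertex_degree_def by (metis filter_mset_eq_mempty_iff not_one_le_zero size_empty)

lemma mset_set_exchange:
  assumes "finite g" "finite h" "v \<in> g" "u \<in> h" "u \<noteq> v" "(g - {v}) \<inter> (h - {u}) = {}"
  shows "mset_set g + mset_set h = mset_set {v, u} + mset_set ((g - {v}) \<union> (h - {u}))"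
  using assms by (simp add: mset_set.remove[of g v] mset_set.remove[of h u] mset_set_Union)

lemma add_mset_pair_subset: "e \<in># M \<Longrightarrow> f \<in># M \<Longrightarrow> e \<noteq> f \<Longrightarrow> {#e, f#} \<subseteq># M"
  by (simp add: insert_subset_eq_iff in_diff_count)

lemma mem_of_pair_subset:
  assumes "{#e, f#} \<subseteq># M"
  shows "e \<in># M" "f \<in># M"
  using assms by (auto simp: insert_subset_eq_iff dest: in_diffD)

lemma three_pairs_of_two_triples:
  assumes "card f = 3" "card g = 3"
  shows "\<exists>P. size P = 3 \<and> (\<forall>p\<in>#P. card p = 2 \<and> p \<subseteq> f \<union> g) \<and> vertex_mset P = mset_set f + mset_set g"
proof -
  obtain a b c where f: "f = {a, b, c}" "a \<noteq> b" "b \<noteq> c" "a \<noteq> c"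
    using assms(1) unfolding card_3_iff by blast
  obtain x y z where g: "g = {x, y, z}" "x \<noteq> y" "y \<noteq> z" "x \<noteq> z"
    using assms(2) unfolding card_3_iff by blast
  obtain x' y' z' where xyz': "{#x', y', z'#} = {#x, y, z#}" "a \<noteq> x'" "b \<noteq> y'" "c \<noteq> z'"
    using f(2-4) g(2-4) by (metis add_mset_commute)
  have "x' \<in> g" "y' \<in> g" "z' \<in> g"
    using xyz'(1) g by (metis insert_iff set_mset_add_mset_insert set_mset_empty)+
  then show ?thesis
    using f g xyz' by (intro exI[of _ "{#{a, x'}, {b, y'}, {c, z'}#}"]) (auto simp: add_mset_commute simp flip: xyz'(1))
qed

lemma in_vertex_mset_iff: "(\<And>e. e \<in># M \<Longrightarrow> finite e) \<Longrightarrow> x \<in># vertex_mset M \<longleftrightarrow> (\<exists>e\<in>#M. x \<in> e)"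
  by (induction M) auto

lemma small_fibre_unique:
  assumes "small_edges B M" "small_edges B N" "vertex_mset M = vertex_mset N" "size (vertex_mset M) \<le> 3"
  shows "M = N"
proof -
  have singleton: "\<exists>e. K = {#e#} \<and> finite e \<and> e \<noteq> {}" if "small_edges B K" "vertex_mset K \<noteq> {#}"
    "size (vertex_mset K) \<le> 3" for K
  proof -
    have "K \<noteq> {#}" "size K \<le> 1"
      using that size_vertex_mset_ge[OF that(1)] by auto
    then obtain e where "K = {#e#}"
      by (metis le_neq_implies_less less_one size_1_singleton_mset size_eq_0_iff_empty)
    then show ?thesis
      using that(2) small_edges_finite[OF that(1)] by auto
  qed
  show ?thesis
  proof (cases "vertex_mset M = {#}")
    case True
    then show ?thesis
      using assms(1-3) size_vertex_mset_ge[of B M] size_vertex_mset_ge[of B N] by auto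
  next
    case False
    then obtain e e' where "M = {#e#}" "N = {#e'#}" "finite e" "finite e'"
      using singleton[OF assms(1)] singleton[OF assms(2)] assms(3,4) by metis
    then show ?thesis
      using assms(3) by (metis finite_set_mset_mset_set vertex_mset_add_mset vertex_mset_empty add_0_right)
  qed
qed

lemma ex_max_count: "D \<noteq> {#} \<Longrightarrow> \<exists>v\<in>#D. \<forall>x. count D x \<le> count D v"
proof -
  assume "D \<noteq> {#}"
  then have "Max (count D ` set_mset D) \<in> count D ` set_mset D"
    by (intro Max_in) auto
  then obtain v where v: "v \<in># D" "count D v = Max (count D ` set_mset D)"
    by (metis imageE)
  have "count D x \<le> count D v" for x
    using v by (cases "x \<in># D") (simp_all add: not_in_iff)
  then show ?thesis
    using v(1) by blast
qed

lemma max_degree_vertices: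
  assumes "small_edges B M" "M \<noteq> {#}"
  shows "\<exists>v u. u \<noteq> v \<and> u \<in># vertex_mset M \<and> (\<forall>x. count (vertex_mset M) x \<le> count (vertex_mset M) v)
    \<and> (\<forall>x. x \<noteq> v \<longrightarrow> count (vertex_mset M) x \<le> count (vertex_mset M) u)"
proof -
  let ?D = "vertex_mset M"
  have in_D: "x \<in># ?D \<longleftrightarrow> (\<exists>e\<in>#M. x \<in> e)" for x
    by (rule in_vertex_mset_iff) (rule small_edges_finite[OF assms(1)])
  obtain e where e: "e \<in># M"
    using assms(2) by blast
  have "e \<noteq> {}"
    using small_edgesD(2)[OF assms(1) e] by auto
  then obtain x where "x \<in> e"
    by blast
  then have "x \<in># ?D"
    using in_D e by blast
  then have "?D \<noteq> {#}"
    by auto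
  then obtain v where max_v: "\<forall>x. count ?D x \<le> count ?D v"
    using ex_max_count by blast
  have "\<not> e \<subseteq> {v}"
    using small_edgesD(2)[OF assms(1) e] card_mono[of "{v}" e] by auto
  then obtain w where "w \<in> e" "w \<noteq> v"
    by blast
  then have "w \<in># {#x \<in># ?D. x \<noteq> v#}"
    using e in_D by auto
  then have "{#x \<in># ?D. x \<noteq> v#} \<noteq> {#}"
    by auto
  then obtain u where u: "u \<in># {#x \<in># ?D. x \<noteq> v#}"
    and max_u: "\<forall>x. count {#x \<in># ?D. x \<noteq> v#} x \<le> count {#x \<in># ?D. x \<noteq> v#} u"
    using ex_max_count by blast
  have "u \<noteq> v" "u \<in># ?D"
    using u by simp_all
  moreover have "count ?D x \<le> count ?D u" if "x \<noteq> v" for x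
    using spec[OF max_u, of x] that \<open>u \<noteq> v\<close> by simp
  ultimately show ?thesis
    using max_v by blast
qed

lemma pair_avoiding_triple:
  assumes M: "small_edges B M" "triple_count M \<le> 1" "4 \<le> size (vertex_mset M)"
    and f: "f \<in># M" "f = {v, u, z}" "u \<noteq> v" "z \<noteq> v" "z \<noteq> u"
    and max_v: "\<And>x. vertex_degree M x \<le> vertex_degree M v"
    and max_u: "\<And>x. x \<noteq> v \<Longrightarrow> vertex_degree M x \<le> vertex_degree M u"
  shows "\<exists>C\<in>#M - {#f#}. card C = 2 \<and> z \<notin> C"
proof -
  define P where "P = M - {#f#}"
  have M_eq: "M = add_mset f P"
    using f(1) by (simp add: P_def)
  have "card f = 3"
    using f(2-5) by simp
  have P_pairs: "card e = 2" if "e \<in># P" for e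
  proof -
    have "triple_count P = 0"
      using M(2) \<open>card f = 3\<close> M_eq by simp
    then have "card e \<noteq> 3"
      using that by (auto simp: triple_count_def filter_mset_eq_mempty_iff)
    moreover have "2 \<le> card e" "card e \<le> 3"
      using small_edgesD(2,3)[OF M(1)] that M_eq by auto
    ultimately show ?thesis
      by linarith
  qed
  have "\<exists>C\<in>#P. z \<notin> C"
  proof (rule ccontr)
    assume no_C: "\<not> (\<exists>C\<in>#P. z \<notin> C)"
    then have "vertex_degree M z = size M"
      using f(2) M_eq by (intro vertex_degree_eq_size) auto
    then have "size M \<le> vertex_degree M v" "size M \<le> vertex_degree M u"
      using max_v max_u f(4) by metis+
    then have all: "e \<in># M \<Longrightarrow> v \<in> e \<and> u \<in> e" for e
      using vertex_degree_less_size by (metis leD)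
    have "P \<noteq> {#}"
      using M(3) M_eq \<open>card f = 3\<close> by auto
    then obtain C where "C \<in># P"
      by blast
    then have "{v, u, z} \<subseteq> C" "card C = 2" "finite C"
      using all no_C P_pairs M_eq card.infinite by fastforce+
    then show False
      using card_mono[of C "{v, u, z}"] f(3-5) by auto
  qed
  then show ?thesis
    using P_pairs unfolding P_def by blast
qed

section \<open>Connecting fibres by moves of at most three edges\<close>

text \<open>\<open>R M N\<close> abstracts ``the binomial \<open>t\<^sup>M - t\<^sup>N\<close> lies in the ideal generated by the quadrics and
  cubics of the toric ideal''; \<open>small_move\<close> excludes moves between single edges, which would
  have degree 1.\<close>

locale move_congruence =
  fixes B :: "'a set" and E :: "'a set set"
    and R :: "'a set multiset \<Rightarrow> 'a set multiset \<Rightarrow> bool"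
  assumes small_edge_mem: "e \<subseteq> B \<Longrightarrow> 2 \<le> card e \<Longrightarrow> card e \<le> 3 \<Longrightarrow> e \<in> E"
    and refl: "R M M"
    and sym: "R M N \<Longrightarrow> R N M"
    and trans: "R M N \<Longrightarrow> R N K \<Longrightarrow> R M K"
    and cong: "R M N \<Longrightarrow> set_mset C \<subseteq> E \<Longrightarrow> R (C + M) (C + N)"
    and small_move: "set_mset X \<subseteq> E \<Longrightarrow> set_mset Y \<subseteq> E \<Longrightarrow> vertex_mset X = vertex_mset Y
      \<Longrightarrow> size X \<le> 3 \<Longrightarrow> size Y \<le> 3 \<Longrightarrow> 2 \<le> max (size X) (size Y) \<Longrightarrow> R X Y"
begin

lemma small_edges_subset_edges: "small_edges B M \<Longrightarrow> set_mset M \<subseteq> E"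
  unfolding small_edges_def using small_edge_mem by blast

lemma move_within:
  assumes "small_edges B M" "X \<subseteq># M" "small_edges B Y" "vertex_mset X = vertex_mset Y"
    "size X \<le> 3" "size Y \<le> 3" "2 \<le> max (size X) (size Y)"
  shows "small_edges B (Y + (M - X)) \<and> vertex_mset (Y + (M - X)) = vertex_mset M \<and> R M (Y + (M - X))"
proof -
  have M: "M = X + (M - X)"
    using assms(2) by simp
  have "small_edges B X" "small_edges B (M - X)"
    using assms(1,2) small_edges_subset[of B M] by simp_all
  then have "R ((M - X) + X) ((M - X) + Y)"
    using assms(3-7) by (intro cong small_move small_edges_subset_edges)
  then have "R M (Y + (M - X))"
    by (subst M) (simp add: add.commute)
  then show ?thesis
    using assms(3,4) \<open>small_edges B (M - X)\<close> by (subst (2 3) M) simp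
qed

lemma reduce_triples:
  "small_edges B M \<Longrightarrow>
    \<exists>M'. small_edges B M' \<and> vertex_mset M' = vertex_mset M \<and> R M M' \<and> triple_count M' \<le> 1"
proof (induction "triple_count M" arbitrary: M rule: less_induct)
  case less
  show ?case
  proof (cases "triple_count M \<le> 1")
    case True
    then show ?thesis
      using less.prems refl by blast
  next
    case False
    define F where "F = {#e \<in># M. card e = 3#}"
    have "2 \<le> size F"
      using False by (simp add: F_def triple_count_def)
    then obtain f where f: "f \<in># F"
      by (metis multiset_nonemptyE not_numeral_le_zero size_empty)
    have "1 \<le> size (F - {#f#})"
      using \<open>2 \<le> size F\<close> f by (simp add: size_Diff_submset)
    then obtain g where g: "g \<in># F - {#f#}"
      by (metis multiset_nonemptyE not_one_le_zero size_empty)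
    have "{#f, g#} \<subseteq># F"
      using f g by (simp add: insert_subset_eq_iff)
    moreover have "F \<subseteq># M"
      unfolding F_def by (rule multiset_filter_subset)
    ultimately have "{#f, g#} \<subseteq># M"
      by (rule subset_mset.trans)
    moreover have "card f = 3" "card g = 3"
      using f in_diffD[OF g] by (simp_all add: F_def)
    ultimately have fg: "{#f, g#} \<subseteq># M" "card f = 3" "card g = 3"
      by blast+
    then have "f \<subseteq> B" "g \<subseteq> B"
      using small_edgesD(1)[OF less.prems] mem_of_pair_subset[OF fg(1)] by blast+
    obtain P where P: "size P = 3" "\<forall>p\<in>#P. card p = 2 \<and> p \<subseteq> f \<union> g"
      "vertex_mset P = mset_set f + mset_set g"
      using three_pairs_of_two_triples[OF fg(2,3)] by blast
    have "small_edges B P"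
      using P(2) \<open>f \<subseteq> B\<close> \<open>g \<subseteq> B\<close> unfolding small_edges_def by auto
    moreover have "triple_count P = 0"
      using P(2) by (auto simp: triple_count_def filter_mset_eq_mempty_iff)
    moreover have "triple_count M = triple_count {#f, g#} + triple_count (M - {#f, g#})"
      by (metis triple_count_union subset_mset.add_diff_inverse[OF fg(1)])
    ultimately have "triple_count (P + (M - {#f, g#})) < triple_count M"
      using fg(2,3) by simp
    moreover have "small_edges B (P + (M - {#f, g#}))" "vertex_mset (P + (M - {#f, g#})) = vertex_mset M"
      "R M (P + (M - {#f, g#}))"
      using move_within[OF less.prems fg(1) \<open>small_edges B P\<close>] P(1,3) by simp_all
    ultimately show ?thesis
      using less.hyps trans by metis
  qed
qed

lemma exchange:
  assumes M: "small_edges B M" "{#g, h#} \<subseteq># M" and card: "card g + card h \<le> 5"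
    and "u \<noteq> v" "finite k" and eq: "mset_set g + mset_set h = mset_set {v, u} + mset_set k"
  shows "\<exists>M'. small_edges B M' \<and> vertex_mset M' = vertex_mset M \<and> R M M' \<and> {v, u} \<in># M'"
proof -
  have gh: "g \<in># M" "h \<in># M"
    using mem_of_pair_subset[OF M(2)] .
  then have "finite g" "finite h" "g \<union> h \<subseteq> B" "2 \<le> card g" "2 \<le> card h"
    using small_edges_finite[OF M(1)] small_edgesD[OF M(1)] by auto
  moreover have "g \<union> h = {v, u} \<union> k" "card g + card h = 2 + card k"
    using arg_cong[OF eq, of set_mset] arg_cong[OF eq, of size] \<open>finite g\<close> \<open>finite h\<close> \<open>u \<noteq> v\<close> \<open>finite k\<close>
    by simp_all
  ultimately have "small_edges B {#{v, u}, k#}"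
    using card \<open>u \<noteq> v\<close> by auto
  then show ?thesis
    using move_within[OF M, of "{#{v, u}, k#}"] eq by (intro exI[of _ "{#{v, u}, k#} + (M - {#g, h#})"]) simp
qed

lemma exchange_in_common_triple:
  assumes M: "small_edges B M" "triple_count M \<le> 1" "4 \<le> size (vertex_mset M)"
    and f: "f \<in># M" "v \<in> f" "u \<in> f" "u \<noteq> v" "{v, u} \<notin># M"
    and max_v: "\<And>x. vertex_degree M x \<le> vertex_degree M v"
    and max_u: "\<And>x. x \<noteq> v \<Longrightarrow> vertex_degree M x \<le> vertex_degree M u"
  shows "\<exists>M'. small_edges B M' \<and> vertex_mset M' = vertex_mset M \<and> R M M' \<and> {v, u} \<in># M'"
proof -
  have "finite f" "card f \<le> 3" "{v, u} \<subseteq> f" "f \<noteq> {v, u}"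
    using small_edges_finite[OF M(1) f(1)] small_edgesD(3)[OF M(1) f(1)] f by auto
  then have "card f = 3"
    using card_mono[OF \<open>finite f\<close> \<open>{v, u} \<subseteq> f\<close>] card_subset_eq[OF \<open>finite f\<close> \<open>{v, u} \<subseteq> f\<close>] f(4)
    by fastforce
  then obtain z where z: "f = {v, u, z}" "z \<noteq> v" "z \<noteq> u"
    using f(2-4) unfolding card_3_iff by auto
  then obtain C where C: "C \<in># M - {#f#}" "card C = 2" "z \<notin> C"
    using pair_avoiding_triple[OF M f(1) _ f(4)] max_v max_u by blast
  have "finite C"
    using C(2) card.infinite by fastforce
  show ?thesis
  proof (rule exchange[OF M(1), of f C u v "insert z C"])
    show "{#f, C#} \<subseteq># M"
      using C(1) f(1) by (simp add: insert_subset_eq_iff)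
    show "card f + card C \<le> 5"
      using \<open>card f = 3\<close> C(2) by simp
    show "mset_set f + mset_set C = mset_set {v, u} + mset_set (insert z C)"
      using z f(4) C(3) \<open>finite C\<close> by simp
  qed (use f(4) \<open>finite C\<close> in simp_all)
qed

lemma exchange_at_pair:
  assumes M: "small_edges B M" "u \<noteq> v" and g: "g \<in># M" "g = {v, y}" "y \<noteq> v"
    and separate: "\<And>e. e \<in># M \<Longrightarrow> v \<in> e \<Longrightarrow> u \<notin> e"
    and max_u: "\<And>x. x \<noteq> v \<Longrightarrow> vertex_degree M x \<le> vertex_degree M u"
  shows "\<exists>M'. small_edges B M' \<and> vertex_mset M' = vertex_mset M \<and> R M M' \<and> {v, u} \<in># M'"
proof -
  have "\<exists>h\<in>#M. u \<in> h \<and> y \<notin> h"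
  proof (rule ccontr)
    assume "\<not> ?thesis"
    then have "vertex_degree M u < vertex_degree M y"
      using g separate by (intro vertex_degree_less[of M u y g]) auto
    then show False
      using max_u[OF g(3)] by simp
  qed
  then obtain h where h: "h \<in># M" "u \<in> h" "y \<notin> h"
    by blast
  have "v \<notin> h" "g \<noteq> h"
    using separate h(1,2) g by auto
  have "finite h" "card h \<le> 3"
    using small_edges_finite[OF M(1) h(1)] small_edgesD(3)[OF M(1) h(1)] by simp_all
  show ?thesis
  proof (rule exchange[OF M(1) add_mset_pair_subset[OF g(1) h(1) \<open>g \<noteq> h\<close>] _ M(2)])
    show "card g + card h \<le> 5"
      using g(2,3) \<open>card h \<le> 3\<close> by simp
    show "mset_set g + mset_set h = mset_set {v, u} + mset_set ((g - {v}) \<union> (h - {u}))"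
      using g(2,3) h \<open>finite h\<close> M(2) by (intro mset_set_exchange) auto
  qed (use \<open>finite h\<close> g(2) in simp)
qed

lemma exchange_at_triples:
  assumes M: "small_edges B M" "triple_count M \<le> 1" "u \<noteq> v" "1 \<le> vertex_degree M u"
    and separate: "\<And>e. e \<in># M \<Longrightarrow> v \<in> e \<Longrightarrow> u \<notin> e"
    and triple: "\<And>e. e \<in># M \<Longrightarrow> v \<in> e \<Longrightarrow> card e = 3"
    and max_v: "\<And>x. vertex_degree M x \<le> vertex_degree M v"
  shows "\<exists>M'. small_edges B M' \<and> vertex_mset M' = vertex_mset M \<and> R M M' \<and> {v, u} \<in># M'"
proof -
  have "vertex_degree M v \<le> triple_count M"
    using triple by (rule vertex_degree_le_triple_count)
  then have deg_le_1: "vertex_degree M x \<le> 1" for x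
    using max_v[of x] M(2) by simp
  obtain g where g: "g \<in># M" "v \<in> g"
    using vertex_degree_pos_ex_edge[of M v] max_v[of u] M(4) by auto
  obtain h where h: "h \<in># M" "u \<in> h"
    using vertex_degree_pos_ex_edge[OF M(4)] by blast
  have "g \<noteq> h"
    using separate[OF g] h(2) by auto
  then have gh: "{#g, h#} \<subseteq># M"
    using g(1) h(1) by (rule add_mset_pair_subset[rotated 2])
  have "g \<inter> h = {}"
  proof (rule ccontr)
    assume "g \<inter> h \<noteq> {}"
    then obtain w where "w \<in> g" "w \<in> h"
      by blast
    then show False
      using vertex_degree_ge_2[OF gh, of w] deg_le_1[of w] by simp
  qed
  have "card g = 3"
    using triple g by blast
  moreover have "triple_count {#g, h#} \<le> 1"
    using triple_count_mono[OF gh] M(2) by simp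
  ultimately have "card h \<noteq> 3"
    by (auto split: if_splits)
  then have "card g + card h \<le> 5"
    using \<open>card g = 3\<close> small_edgesD(3)[OF M(1) h(1)] by linarith
  moreover have "finite g" "finite h"
    using M(1) g(1) h(1) small_edges_finite by blast+
  moreover have "mset_set g + mset_set h = mset_set {v, u} + mset_set ((g - {v}) \<union> (h - {u}))"
    using g h M(3) \<open>g \<inter> h = {}\<close> \<open>finite g\<close> \<open>finite h\<close> by (intro mset_set_exchange) auto
  ultimately show ?thesis
    by (intro exchange[OF M(1) gh _ M(3)]) simp_all
qed

lemma exchange_at_max_degree_vertices:
  assumes M: "small_edges B M" "triple_count M \<le> 1" "4 \<le> size (vertex_mset M)"
    and uv: "u \<noteq> v" "1 \<le> vertex_degree M u"
    and max_v: "\<And>x. vertex_degree M x \<le> vertex_degree M v"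
    and max_u: "\<And>x. x \<noteq> v \<Longrightarrow> vertex_degree M x \<le> vertex_degree M u"
  shows "\<exists>M'. small_edges B M' \<and> vertex_mset M' = vertex_mset M \<and> R M M' \<and> {v, u} \<in># M'"
proof (cases "{v, u} \<in># M")
  case True
  then show ?thesis
    using M(1) refl by blast
next
  case False
  show ?thesis
  proof (cases "\<exists>f\<in>#M. v \<in> f \<and> u \<in> f")
    case True
    then show ?thesis
      using exchange_in_common_triple[OF M] uv(1) False max_v max_u by blast
  next
    case separate: False
    show ?thesis
    proof (cases "\<exists>g\<in>#M. v \<in> g \<and> card g = 2")
      case True
      then obtain g y where "g \<in># M" "g = {v, y}" "y \<noteq> v"
        unfolding card_2_iff by (metis insert_commute insert_iff singletonD)
      then show ?thesis
        using exchange_at_pair[OF M(1) uv(1)] separate max_u by blast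
    next
      case False
      have "card e = 3" if "e \<in># M" "v \<in> e" for e
        using small_edgesD(2,3)[OF M(1) that(1)] False that by fastforce
      then show ?thesis
        using exchange_at_triples[OF M(1,2) uv] separate max_v by blast
    qed
  qed
qed

lemma move_to_edge_at_max_degree_vertices:
  assumes M: "small_edges B M" "4 \<le> size (vertex_mset M)" and uv: "u \<noteq> v" "u \<in># vertex_mset M"
    and max_v: "\<And>x. count (vertex_mset M) x \<le> count (vertex_mset M) v"
    and max_u: "\<And>x. x \<noteq> v \<Longrightarrow> count (vertex_mset M) x \<le> count (vertex_mset M) u"
  shows "\<exists>M'. small_edges B M' \<and> vertex_mset M' = vertex_mset M \<and> R M M' \<and> {v, u} \<in># M'"
proof -
  obtain M1 where M1: "small_edges B M1" "vertex_mset M1 = vertex_mset M" "R M M1" "triple_count M1 \<le> 1"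
    using reduce_triples[OF M(1)] by blast
  have deg: "vertex_degree M1 x = count (vertex_mset M) x" for x
    using count_vertex_mset[of M1 x] small_edges_finite[OF M1(1)] M1(2) by simp
  obtain M2 where "small_edges B M2" "vertex_mset M2 = vertex_mset M1" "R M1 M2" "{v, u} \<in># M2"
    using exchange_at_max_degree_vertices[OF M1(1,4) _ uv(1)] M(2) M1(2) uv(2) max_v max_u
    by (auto simp: deg)
  then show ?thesis
    using M1 trans by metis
qed

theorem fibre_connected_small:
  "small_edges B M \<Longrightarrow> small_edges B N \<Longrightarrow> vertex_mset M = vertex_mset N \<Longrightarrow> R M N"
proof (induction "size (vertex_mset M)" arbitrary: M N rule: less_induct)
  case less
  show ?case
  proof (cases "size (vertex_mset M) \<le> 3")
    case True
    then have "M = N"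
      by (rule small_fibre_unique[OF less.prems])
    then show ?thesis
      using refl by simp
  next
    case False
    then have "M \<noteq> {#}"
      by auto
    then obtain v u where uv: "u \<noteq> v" "u \<in># vertex_mset M"
      and max_v: "\<forall>x. count (vertex_mset M) x \<le> count (vertex_mset M) v"
      and max_u: "\<forall>x. x \<noteq> v \<longrightarrow> count (vertex_mset M) x \<le> count (vertex_mset M) u"
      using max_degree_vertices[OF less.prems(1)] by blast
    have "4 \<le> size (vertex_mset M)"
      using False by simp
    obtain M' where M': "small_edges B M'" "vertex_mset M' = vertex_mset M" "R M M'" "{v, u} \<in># M'"
      using move_to_edge_at_max_degree_vertices[OF less.prems(1) \<open>4 \<le> _\<close> uv max_v[rule_format] max_u[rule_format]] by blast
    obtain N' where N': "small_edges B N'" "vertex_mset N' = vertex_mset M" "R N N'" "{v, u} \<in># N'"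
      using move_to_edge_at_max_degree_vertices[OF less.prems(2), unfolded less.prems(3)[symmetric],
          OF \<open>4 \<le> _\<close> uv max_v[rule_format] max_u[rule_format]] by blast
    define M'' N'' where "M'' = M' - {#{v, u}#}" and "N'' = N' - {#{v, u}#}"
    have split: "M' = {#{v, u}#} + M''" "N' = {#{v, u}#} + N''"
      using M'(4) N'(4) by (simp_all add: M''_def N''_def)
    have small: "small_edges B {#{v, u}#}" "small_edges B M''" "small_edges B N''"
      using M'(1) N'(1) split by (metis small_edges_union)+
    have "vertex_mset M'' = vertex_mset N''"
      using arg_cong[OF split(1), of vertex_mset] arg_cong[OF split(2), of vertex_mset] M'(2) N'(2) by simp
    moreover have "size (vertex_mset M'') < size (vertex_mset M)"
      using arg_cong[OF split(1), of "\<lambda>X. size (vertex_mset X)"] M'(2) uv(1) by simp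
    ultimately have "R M'' N''"
      using less.hyps small(2,3) by blast
    then have "R M' N'"
      using cong[OF _ small_edges_subset_edges[OF small(1)]] split by metis
    then show ?thesis
      using trans[OF M'(3) trans[OF _ sym[OF N'(3)]]] by blast
  qed
qed

lemma split_edge:
  assumes large: "\<And>e. e \<subseteq> B \<Longrightarrow> 2 \<le> card e \<Longrightarrow> e \<in> E"
  shows "e \<subseteq> B \<Longrightarrow> 2 \<le> card e \<Longrightarrow> \<exists>X. small_edges B X \<and> vertex_mset X = mset_set e \<and> R {#e#} X"
proof (induction "card e" arbitrary: e rule: less_induct)
  case less
  show ?case
  proof (cases "card e \<le> 3")
    case True
    then show ?thesis
      using less.prems refl by (intro exI[of _ "{#e#}"]) simp
  next
    case False
    have "finite e"
      using less.prems(2) card.infinite by fastforce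
    have "\<not> card e \<le> Suc 0"
      using less.prems(2) by simp
    then obtain a b where ab: "a \<in> e" "b \<in> e" "a \<noteq> b"
      using card_le_Suc0_iff_eq[OF \<open>finite e\<close>] by blast
    define e' where "e' = e - {a, b}"
    have card_e': "card e' = card e - 2"
      using \<open>finite e\<close> ab by (simp add: e'_def card_Diff_subset)
    have "e' \<subseteq> B" "{a, b} \<subseteq> B"
      using less.prems(1) ab by (auto simp: e'_def)
    have "card e' < card e" "2 \<le> card e'"
      using card_e' False by auto
    then obtain X' where X': "small_edges B X'" "vertex_mset X' = mset_set e'" "R {#e'#} X'"
      using less.hyps[OF \<open>card e' < card e\<close> \<open>e' \<subseteq> B\<close> \<open>2 \<le> card e'\<close>] by blast
    have "e = {a, b} \<union> e'"
      using ab by (auto simp: e'_def)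
    then have split: "mset_set e = mset_set {a, b} + mset_set e'"
      using \<open>finite e\<close> by (metis mset_set_Union finite_Un Diff_disjoint e'_def)
    have "e \<in> E" "e' \<in> E" "{a, b} \<in> E"
      using large[OF less.prems] large[OF \<open>e' \<subseteq> B\<close> \<open>2 \<le> card e'\<close>]
        small_edge_mem[OF \<open>{a, b} \<subseteq> B\<close>] ab(3) by simp_all
    then have "R {#e#} {#{a, b}, e'#}"
      using split by (intro small_move) simp_all
    moreover have "R {#{a, b}, e'#} ({#{a, b}#} + X')"
      using cong[OF X'(3), of "{#{a, b}#}"] \<open>{a, b} \<in> E\<close> by (simp add: add_mset_commute)
    ultimately have "R {#e#} ({#{a, b}#} + X')"
      by (rule trans)
    then show ?thesis
      using X'(1,2) \<open>{a, b} \<subseteq> B\<close> ab(3) split by (intro exI[of _ "{#{a, b}#} + X'"]) simp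
  qed
qed

lemma split_edges:
  assumes large: "\<And>e. e \<subseteq> B \<Longrightarrow> 2 \<le> card e \<Longrightarrow> e \<in> E"
  shows "\<forall>e\<in>#M. e \<subseteq> B \<and> 2 \<le> card e \<Longrightarrow> \<exists>X. small_edges B X \<and> vertex_mset X = vertex_mset M \<and> R M X"
proof (induction M)
  case empty
  then show ?case
    using refl by (intro exI[of _ "{#}"]) simp
next
  case (add e M)
  obtain X where X: "small_edges B X" "vertex_mset X = vertex_mset M" "R M X"
    using add by auto
  have "e \<subseteq> B" "2 \<le> card e"
    using add.prems by simp_all
  then obtain Y where Y: "small_edges B Y" "vertex_mset Y = mset_set e" "R {#e#} Y"
    using split_edge[OF large] by blast
  have "set_mset M \<subseteq> E"
    using add.prems large by auto
  then have "R (M + {#e#}) (M + Y)"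
    by (rule cong[OF Y(3)])
  moreover have "R (Y + M) (Y + X)"
    using cong[OF X(3) small_edges_subset_edges[OF Y(1)]] .
  ultimately have "R (add_mset e M) (Y + X)"
    using trans by (metis add.commute add_mset_add_single)
  then show ?case
    using X Y by (intro exI[of _ "Y + X"]) simp
qed

theorem fibre_connected:
  assumes large: "\<And>e. e \<subseteq> B \<Longrightarrow> 2 \<le> card e \<Longrightarrow> e \<in> E"
    and "\<forall>e\<in>#M. e \<subseteq> B \<and> 2 \<le> card e" "\<forall>e\<in>#N. e \<subseteq> B \<and> 2 \<le> card e"
    and "vertex_mset M = vertex_mset N"
  shows "R M N"
proof -
  obtain X where X: "small_edges B X" "vertex_mset X = vertex_mset M" "R M X"
    using split_edges[OF large assms(2)] by blast
  obtain Y where Y: "small_edges B Y" "vertex_mset Y = vertex_mset N" "R N Y"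
    using split_edges[OF large assms(3)] by blast
  have "R X Y"
    using fibre_connected_small[OF X(1) Y(1)] X(2) Y(2) assms(4) by simp
  then show ?thesis
    using trans[OF X(3) trans[OF _ sym[OF Y(3)]]] by blast
qed

end

section \<open>Binomials of low degree generate the toric ideal\<close>

definition low_degree_toric :: "nat set set \<Rightarrow> (nat set, 'k::field) mpoly set" where
  "low_degree_toric E = {g \<in> toric_ideal E. g \<noteq> 0 \<and> total_degree g \<in> {2, 3}}"

lemma keys_mset_binomial:
  assumes "X \<noteq> Y"
  shows "Poly_Mapping.keys (mset_monomial X - mset_monomial Y :: ('a, 'k::comm_ring_1) mpoly)
    = {pm_of_mset X, pm_of_mset Y}"
proof -
  have "Poly_Mapping.lookup (mset_monomial X - mset_monomial Y :: ('a, 'k) mpoly) m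
      = (if m = pm_of_mset X then 1 else if m = pm_of_mset Y then -1 else 0)" for m
    using assms by (simp add: mset_monomial_def lookup_minus lookup_single when_def)
  then show ?thesis
    by (auto simp: in_keys_iff split: if_splits)
qed

lemma total_degree_mset_binomial:
  assumes "X \<noteq> Y"
  shows "total_degree (mset_monomial X - mset_monomial Y :: ('a, 'k::comm_ring_1) mpoly) = max (size X) (size Y)"
proof -
  have "(\<Sum>v\<in>Poly_Mapping.keys (pm_of_mset Z). Poly_Mapping.lookup (pm_of_mset Z) v) = size Z" for Z :: "'a multiset"
    by (simp add: size_multiset_overloaded_eq)
  then show ?thesis
    unfolding total_degree_def keys_mset_binomial[OF assms] by simp
qed

lemma mset_binomial_mem_toric_ideal:
  assumes "set_mset X \<subseteq> E" "set_mset Y \<subseteq> E" "vertex_mset X = vertex_mset Y"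
  shows "(mset_monomial X - mset_monomial Y :: (nat set, 'k::field) mpoly) \<in> toric_ideal E"
proof -
  have "mset_monomial X - mset_monomial Y \<in> (poly_ring_on E :: (nat set, 'k) mpoly set)"
    using assms(1,2) unfolding mset_monomial_def by (intro poly_ring_on_diff single_mem_poly_ring_on) simp_all
  moreover have "map_monomials edge_degrees (mset_monomial X - mset_monomial Y :: (nat set, 'k) mpoly) = 0"
    using assms(3) by (simp add: mset_monomial_def map_monomials_diff edge_degrees_def)
  ultimately show ?thesis
    by (simp add: toric_ideal_def hyper_hom_eq_map_monomials)
qed

lemma move_congruence_low_degree_binomials:
  assumes "\<And>e. e \<subseteq> B \<Longrightarrow> 2 \<le> card e \<Longrightarrow> card e \<le> 3 \<Longrightarrow> e \<in> E"
  shows "move_congruence B E (\<lambda>M N. (mset_monomial M - mset_monomial N :: (nat set, 'k::field) mpoly)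
    \<in> ideal_gen_on E (low_degree_toric E))"
proof unfold_locales
  fix M N K C X Y :: "nat set multiset"
  let ?b = "\<lambda>M N. mset_monomial M - mset_monomial N :: (nat set, 'k) mpoly"
  let ?I = "ideal_gen_on E (low_degree_toric E)"
  show "?b M M \<in> ?I"
    by (simp add: ideal_gen_on_zero)
  show "?b N M \<in> ?I" if "?b M N \<in> ?I"
    using ideal_gen_on_uminus[OF that] by simp
  show "?b M K \<in> ?I" if "?b M N \<in> ?I" "?b N K \<in> ?I"
    using ideal_gen_on_add[OF that] by simp
  show "?b (C + M) (C + N) \<in> ?I" if "?b M N \<in> ?I" "set_mset C \<subseteq> E"
  proof -
    have "mset_monomial C * ?b M N \<in> ?I"
      using that unfolding mset_monomial_def by (intro ideal_gen_on_mult single_mem_poly_ring_on) simp_all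
    then show ?thesis
      by (simp add: mset_monomial_union right_diff_distrib)
  qed
  show "?b X Y \<in> ?I" if "set_mset X \<subseteq> E" "set_mset Y \<subseteq> E" "vertex_mset X = vertex_mset Y"
    "size X \<le> 3" "size Y \<le> 3" "2 \<le> max (size X) (size Y)"
  proof (cases "X = Y")
    case True
    then show ?thesis
      by (simp add: ideal_gen_on_zero)
  next
    case False
    then have "?b X Y \<noteq> 0"
      using keys_mset_binomial[OF False] by (metis empty_not_insert keys_zero)
    moreover have "total_degree (?b X Y) = max (size X) (size Y)"
      by (rule total_degree_mset_binomial[OF False])
    then have "total_degree (?b X Y) \<in> {2, 3}"
      using that(4-6) by auto
    ultimately have "?b X Y \<in> low_degree_toric E"
      using mset_binomial_mem_toric_ideal[OF that(1-3)] by (simp add: low_degree_toric_def)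
    then show ?thesis
      by (rule ideal_gen_on_generator)
  qed
qed (use assms in blast)

lemma generated_in_degrees_2_3_if_binomials:
  assumes binomial: "\<And>M N. set_mset M \<subseteq> E \<Longrightarrow> set_mset N \<subseteq> E \<Longrightarrow> vertex_mset M = vertex_mset N \<Longrightarrow>
    (mset_monomial M - mset_monomial N :: (nat set, 'k::field) mpoly) \<in> ideal_gen_on E (low_degree_toric E)"
  shows "generated_in_degrees_2_3 E (toric_ideal E :: (nat set, 'k) mpoly set)"
  unfolding generated_in_degrees_2_3_def
proof (intro exI conjI)
  show "low_degree_toric E \<subseteq> (poly_ring_on E :: (nat set, 'k) mpoly set)"
    by (auto simp: low_degree_toric_def toric_ideal_def)
  show "\<forall>g\<in>(low_degree_toric E :: (nat set, 'k) mpoly set). g \<noteq> 0 \<and> total_degree g \<in> {2, 3}"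
    by (simp add: low_degree_toric_def)
  have "toric_ideal E \<subseteq> ideal_gen_on E (low_degree_toric E :: (nat set, 'k) mpoly set)"
  proof (rule toric_ideal_subset_ideal_gen_on)
    fix m m' :: "nat set \<Rightarrow>\<^sub>0 nat"
    assume "Poly_Mapping.keys m \<subseteq> E" "Poly_Mapping.keys m' \<subseteq> E" "edge_degrees m = edge_degrees m'"
    then show "Poly_Mapping.single m 1 - Poly_Mapping.single m' 1
        \<in> ideal_gen_on E (low_degree_toric E :: (nat set, 'k) mpoly set)"
      using binomial[of "mset_of_pm m" "mset_of_pm m'"] by (simp add: edge_degrees_def mset_monomial_def)
  qed
  moreover have "ideal_gen_on E (low_degree_toric E) \<subseteq> (toric_ideal E :: (nat set, 'k) mpoly set)"
    by (rule ideal_gen_on_subset_toric_ideal) (auto simp: low_degree_toric_def)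
  ultimately show "ideal_gen_on E (low_degree_toric E) = (toric_ideal E :: (nat set, 'k) mpoly set)"
    by blast
qed

theorem theorem5p6:
  fixes n :: nat
  shows "generated_in_degrees_2_3 {e. e \<subseteq> {1..n} \<and> 2 \<le> card e \<and> card e \<le> 3}
           (toric_ideal {e. e \<subseteq> {1..n} \<and> 2 \<le> card e \<and> card e \<le> 3} :: (nat set, 'k::field) mpoly set)
       \<and> generated_in_degrees_2_3 {e. e \<subseteq> {1..n} \<and> 2 \<le> card e}
           (toric_ideal {e. e \<subseteq> {1..n} \<and> 2 \<le> card e} :: (nat set, 'k) mpoly set)"
proof
  let ?E = "{e. e \<subseteq> {1..n} \<and> 2 \<le> card e \<and> card e \<le> 3}"
  interpret move_congruence "{1..n}" ?E
    "\<lambda>M N. (mset_monomial M - mset_monomial N :: (nat set, 'k) mpoly) \<in> ideal_gen_on ?E (low_degree_toric ?E)"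
    by (rule move_congruence_low_degree_binomials) simp
  show "generated_in_degrees_2_3 ?E (toric_ideal ?E :: (nat set, 'k) mpoly set)"
    by (rule generated_in_degrees_2_3_if_binomials, rule fibre_connected_small) (auto simp: small_edges_def)
next
  let ?E = "{e. e \<subseteq> {1..n} \<and> 2 \<le> card e}"
  interpret move_congruence "{1..n}" ?E
    "\<lambda>M N. (mset_monomial M - mset_monomial N :: (nat set, 'k) mpoly) \<in> ideal_gen_on ?E (low_degree_toric ?E)"
    by (rule move_congruence_low_degree_binomials) simp
  show "generated_in_degrees_2_3 ?E (toric_ideal ?E :: (nat set, 'k) mpoly set)"
    by (rule generated_in_degrees_2_3_if_binomials, rule fibre_connected) auto
qed

end
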